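(* For every integer $t\ge 3$, the set $[3^t+8]$ admits a $3$-good partition; one such partition consists of the pairs $\{i,\ 3^t-i\}$ for $1\le i\le (3^t-1)/2$ with $i\notin\{3,9,11,13\}$, the singletons $\{9\}$ and $\{3^t\}$, and the triples $\{3,11,13\}$, $\{3^t-3,3^t+1,3^t+2\}$, $\{3^t-9,3^t+3,3^t+6\}$, $\{3^t-11,3^t+4,3^t+7\}$, $\{3^t-13,3^t+5,3^t+8\}$.
   Context: A partition of $[n]=\{1,\dots,n\}$ into nonempty parts is called $3$-good if every part has at most $3$ elements and the sum of the elements of every part is a power of $3$, i.e. equals $3^s$ for some integer $s\ge 0$. *)

theory Defs
  imports Main "HOL-Library.Disjoint_Sets"
begin

definition three_good :: "nat \<Rightarrow> nat set set \<Rightarrow> bool" where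
  "three_good n P \<longleftrightarrow> partition_on {1..n} P \<and>
     (\<forall>B\<in>P. card B \<le> 3 \<and> (\<exists>s::nat. \<Sum>B = 3 ^ s))"

end

theory Submission
  imports Defs
begin

text \<open>Write N = 3^t. Apart from 3, 9, 11, 13 and their complements N - 3, N - 9, N - 11, N - 13,
the numbers below N pair off as {i, N - i}, each pair summing to N. The eight excluded numbers,
together with N, ..., N + 8, are covered by the seven exceptional blocks, whose sums are
9 = 3^2, N, 27 = 3^3 and 3 N = 3^(t+1).\<close>

lemma partition_on_Un:
  assumes "disjnt A B" "partition_on A P" "partition_on B Q"
  shows "partition_on (A \<union> B) (P \<union> Q)"
  using assms disjoint_union[of P Q] unfolding partition_on_def disjnt_def by auto

definition complement_pairs :: "nat \<Rightarrow> nat set \<Rightarrow> nat set set" where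
  "complement_pairs N E = {{i, N - i} | i. 1 \<le> i \<and> i \<le> (N - 1) div 2 \<and> i \<notin> E}"

lemma partition_on_complement_pairs:
  assumes "odd N" and "E \<subseteq> {1..(N - 1) div 2}"
  shows "partition_on ({1..<N} - (E \<union> (\<lambda>i. N - i) ` E)) (complement_pairs N E)"
proof (rule partition_onI)
  show "\<Union>(complement_pairs N E) = {1..<N} - (E \<union> (\<lambda>i. N - i) ` E)"
  proof (intro equalityI subsetI)
    fix x assume "x \<in> \<Union>(complement_pairs N E)"
    then obtain i where "x \<in> {i, N - i}" "1 \<le> i" "i \<le> (N - 1) div 2" "i \<notin> E"
      by (auto simp: complement_pairs_def)
    moreover have small: "2 * e < N" if "e \<in> E" for e
      using that assms by (auto elim!: oddE)
    moreover have "2 * i < N"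
      using \<open>i \<le> (N - 1) div 2\<close> assms(1) by (auto elim!: oddE)
    moreover have "i = e" if "N - i = N - e" "e \<in> E" for e
      using small[OF that(2)] \<open>2 * i < N\<close> that(1) by linarith
    ultimately show "x \<in> {1..<N} - (E \<union> (\<lambda>i. N - i) ` E)"
      by (auto dest: small)
  next
    fix x assume x: "x \<in> {1..<N} - (E \<union> (\<lambda>i. N - i) ` E)"
    show "x \<in> \<Union>(complement_pairs N E)"
    proof (cases "x \<le> (N - 1) div 2")
      case True
      then have "{x, N - x} \<in> complement_pairs N E"
        using x by (auto simp: complement_pairs_def)
      then show ?thesis by blast
    next
      case False
      define j where "j = N - x"
      have "x = N - j" "1 \<le> j" "j \<le> (N - 1) div 2"
        using x False assms(1) unfolding j_def by (auto elim!: oddE)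
      moreover have "j \<notin> E"
        using x \<open>x = N - j\<close> by auto
      ultimately have "x \<in> {j, N - j}" "{j, N - j} \<in> complement_pairs N E"
        by (auto simp: complement_pairs_def)
      then show ?thesis by blast
    qed
  qed
next
  fix p q assume "p \<in> complement_pairs N E" "q \<in> complement_pairs N E" "p \<noteq> q"
  then show "disjnt p q"
    by (auto simp: complement_pairs_def disjnt_def)
next
  show "{} \<notin> complement_pairs N E"
    by (auto simp: complement_pairs_def)
qed

lemma sum_complement_pair: "B \<in> complement_pairs N E \<Longrightarrow> \<Sum>B = N"
  by (auto simp: complement_pairs_def)

lemma card_complement_pair: "B \<in> complement_pairs N E \<Longrightarrow> card B \<le> 2"
  by (auto simp: complement_pairs_def card_insert_if)

definition exceptional_blocks :: "nat \<Rightarrow> nat set set" where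
  "exceptional_blocks N = {{9}, {N}, {3, 11, 13}, {N - 3, N + 1, N + 2}, {N - 9, N + 3, N + 6},
     {N - 11, N + 4, N + 7}, {N - 13, N + 5, N + 8}}"

lemma partition_on_exceptional_blocks:
  assumes "27 \<le> N"
  shows "partition_on ({3, 9, 11, 13} \<union> (\<lambda>i. N - i) ` {3, 9, 11, 13} \<union> {N..N + 8})
    (exceptional_blocks N)"
proof -
  obtain M where N: "N = M + 27"
    using assms le_Suc_ex by (metis add.commute)
  have "{N..N + 8} = {N, N + 1, N + 2, N + 3, N + 4, N + 5, N + 6, N + 7, N + 8}"
    by auto
  then show ?thesis
    unfolding exceptional_blocks_def partition_on_def disjoint_def N by auto
qed

lemma sum_exceptional_block:
  assumes "13 \<le> N" "B \<in> exceptional_blocks N"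
  shows "\<Sum>B \<in> {9, 27, N, 3 * N}"
proof -
  obtain M where N: "N = M + 13"
    using assms le_Suc_ex by (metis add.commute)
  show ?thesis
    using assms(2) unfolding exceptional_blocks_def N by auto
qed

lemma card_exceptional_block: "B \<in> exceptional_blocks N \<Longrightarrow> card B \<le> 3"
  by (auto simp: exceptional_blocks_def card_insert_if)

lemma partition_on_complement_pairs_exceptional_blocks:
  assumes "odd N" "27 \<le> N"
  shows "partition_on {1..N + 8} (complement_pairs N {3, 9, 11, 13} \<union> exceptional_blocks N)"
proof -
  let ?E = "{3, 9, 11, 13} :: nat set"
  let ?X = "?E \<union> (\<lambda>i. N - i) ` ?E"
  have "{1..N + 8} = ({1..<N} - ?X) \<union> (?X \<union> {N..N + 8})"
    using assms(2) by auto
  moreover have "disjnt ({1..<N} - ?X) (?X \<union> {N..N + 8})"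
    by (auto simp: disjnt_def)
  moreover have "partition_on ({1..<N} - ?X) (complement_pairs N ?E)"
    using assms by (intro partition_on_complement_pairs) auto
  ultimately show ?thesis
    using partition_on_Un partition_on_exceptional_blocks[OF assms(2)] by metis
qed

theorem mainTheorem11:
  fixes t :: nat
  assumes "t \<ge> 3"
  shows "(\<exists>P. three_good (3 ^ t + 8) P) \<and>
    three_good (3 ^ t + 8)
      ({{i, 3 ^ t - i} | i. 1 \<le> i \<and> i \<le> (3 ^ t - 1) div 2 \<and> i \<notin> {3, 9, 11, 13}}
       \<union> {{9}, {3 ^ t}, {3, 11, 13},
          {3 ^ t - 3, 3 ^ t + 1, 3 ^ t + 2}, {3 ^ t - 9, 3 ^ t + 3, 3 ^ t + 6},
          {3 ^ t - 11, 3 ^ t + 4, 3 ^ t + 7}, {3 ^ t - 13, 3 ^ t + 5, 3 ^ t + 8}})"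
proof -
  define N :: nat where "N = 3 ^ t"
  have "27 \<le> N"
    using power_increasing[OF assms, of "3 :: nat"] unfolding N_def by simp
  moreover have "odd N"
    unfolding N_def by simp
  ultimately have "three_good (N + 8) (complement_pairs N {3, 9, 11, 13} \<union> exceptional_blocks N)"
    unfolding three_good_def
  proof (intro conjI ballI partition_on_complement_pairs_exceptional_blocks)
    fix B assume B: "B \<in> complement_pairs N {3, 9, 11, 13} \<union> exceptional_blocks N"
    then show "card B \<le> 3"
      using card_complement_pair card_exceptional_block by fastforce
    have "\<Sum>B \<in> {9, 27, N, 3 * N}"
      using B sum_complement_pair sum_exceptional_block[of N B] \<open>27 \<le> N\<close> by auto
    then have "\<Sum>B \<in> {3 ^ 2, 3 ^ 3, 3 ^ t, 3 ^ Suc t}"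
      unfolding N_def by auto
    then show "\<exists>s. \<Sum>B = 3 ^ s"
      by blast
  qed
  then show ?thesis
    unfolding N_def complement_pairs_def exceptional_blocks_def by blast
qed

end
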